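(* Let $\{\ket{j}\}_{j=0}^{7}$ be the computational basis of three qubits, where $\ket{j}=\ket{j_1j_2j_3}$ with $j=4j_1+2j_2+j_3$, and let $$\ket{\psi_1}=\frac{1}{2\sqrt{2}}\left(\ket{0}+\ket{1}+\ket{2}+\ket{3}+\ket{4}+\ket{5}+\ket{6}-\ket{7}\right),\qquad \rho_1=\ket{\psi_1}\bra{\psi_1}.$$ Denote by $A_1,B_1,C_1$ the first, second and third qubits of $\rho_1$. Then $$D(B_1C_1|A_1)=D(A_1C_1|B_1)=D(A_1B_1|C_1)=D(C_1|A_1B_1)=D(B_1|A_1C_1)=D(A_1|B_1C_1)=-\tfrac{1}{4}\log\tfrac{1}{4}-\tfrac{3}{4}\log\tfrac{3}{4}\approx 0.81.$$
   Context: Logarithms are base 2, and $S(\sigma)=-\mathrm{Tr}(\sigma\log\sigma)$ is the von Neumann entropy. For a state $\rho_{XY}$ on a bipartite system $X\otimes Y$ (here $X$ and $Y$ are complementary groups of the three qubits), the quantum discord with measurement on $X$ is $$D(Y|X)=\min_{\{E_a\}}\sum_a p_a S(\rho_{Y|a})+S(\rho_X)-S(\rho_{XY}),$$ where the minimum is over all POVMs $\{E_a\}$ on $X$ ($E_a\ge 0$, $\sum_a E_a=I$), $p_a=\mathrm{Tr}((E_a\otimes I)\rho_{XY})$, $\rho_{Y|a}=\mathrm{Tr}_X((E_a\otimes I)\rho_{XY})/p_a$, and $\rho_X,\rho_Y$ are reduced states. For example $D(B_1C_1|A_1)$ is the discord of $\rho_1$ viewed as a state on $A_1\otimes (B_1C_1)$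 with measurement on $A_1$, and $D(C_1|A_1B_1)$ is the discord with measurement on $A_1B_1$. *)

theory Defs
  imports "Jordan_Normal_Form.Matrix" "Jordan_Normal_Form.Char_Poly"
begin

definition eta :: "real \<Rightarrow> real" where
  "eta x = (if x \<le> 0 then 0 else - x * log 2 x)"

(* von Neumann entropy S(A) = - Tr(A log A) = sum over eigenvalues (with algebraic
   multiplicity, i.e. roots of the characteristic polynomial) of -lambda log2 lambda *)
definition vn_entropy :: "complex mat \<Rightarrow> real" where
  "vn_entropy A = (\<Sum>z\<in>{z. poly (char_poly A) z = 0}.
                      real (order z (char_poly A)) * eta (Re z))"

definition psd :: "nat \<Rightarrow> complex mat \<Rightarrow> bool" where
  "psd d E \<longleftrightarrow> E \<in> carrier_mat d d \<and>
     (\<forall>v \<in> carrier_vec d. Im (\<Sum>i<d. \<Sum>j<d. cnj (v $ i) * E $$ (i, j) * v $ j) = 0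
                        \<and> Re (\<Sum>i<d. \<Sum>j<d. cnj (v $ i) * E $$ (i, j) * v $ j) \<ge> 0)"

definition povm :: "nat \<Rightarrow> complex mat list \<Rightarrow> bool" where
  "povm d Es \<longleftrightarrow> (\<forall>E \<in> set Es. psd d E) \<and>
     (\<forall>i<d. \<forall>j<d. (\<Sum>k<length Es. Es ! k $$ (i, j)) = (if i = j then 1 else 0))"

(* Bipartite operators on X \<otimes> Y, basis index (x,y) \<mapsto> x * dY + y *)
definition ptrace_X :: "nat \<Rightarrow> nat \<Rightarrow> complex mat \<Rightarrow> complex mat" where
  "ptrace_X dX dY R = mat dY dY (\<lambda>(y, y'). \<Sum>x<dX. R $$ (x * dY + y, x * dY + y'))"

definition ptrace_Y :: "nat \<Rightarrow> nat \<Rightarrow> complex mat \<Rightarrow> complex mat" where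
  "ptrace_Y dX dY R = mat dX dX (\<lambda>(x, x'). \<Sum>y<dY. R $$ (x * dY + y, x' * dY + y))"

definition tensor_id :: "nat \<Rightarrow> nat \<Rightarrow> complex mat \<Rightarrow> complex mat" where
  "tensor_id dX dY E = mat (dX * dY) (dX * dY)
     (\<lambda>(i, j). if i mod dY = j mod dY then E $$ (i div dY, j div dY) else 0)"

(* p_a S(rho_{Y|a}), taken to be 0 when p_a = 0 *)
definition cond_term :: "nat \<Rightarrow> nat \<Rightarrow> complex mat \<Rightarrow> complex mat \<Rightarrow> real" where
  "cond_term dX dY R E =
     (let M = tensor_id dX dY E * R;
          p = Re (\<Sum>i<dim_row M. M $$ (i, i));
          sig = ptrace_X dX dY M
      in if p = 0 then 0 else p * vn_entropy ((1 / complex_of_real p) \<cdot>\<^sub>m sig))"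

(* quantum discord D(Y|X) of a bipartite state R on X \<otimes> Y, measurement on X;
   the minimum over POVMs is rendered as the infimum *)
definition discord :: "nat \<Rightarrow> nat \<Rightarrow> complex mat \<Rightarrow> real" where
  "discord dX dY R =
     (INF Es \<in> {Es. povm dX Es}. \<Sum>k<length Es. cond_term dX dY R (Es ! k))
       + vn_entropy (ptrace_Y dX dY R) - vn_entropy R"

(* n qubits, qubit k (0-based, k < n) is bit (n-1-k) of a basis index j,
   so qubit 0 is the most significant one: |j> = |j_0 j_1 ... j_{n-1}> *)
definition qbit :: "nat \<Rightarrow> nat \<Rightarrow> nat \<Rightarrow> nat" where
  "qbit n k j = j div 2 ^ (n - 1 - k) mod 2"

(* index of the basis state of the n-qubit system whose qubits at positions qs
   (listed in increasing order) carry the bits of a (first listed = most significant) *)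
definition place :: "nat \<Rightarrow> nat list \<Rightarrow> nat \<Rightarrow> nat" where
  "place n qs a = (\<Sum>k<length qs. (a div 2 ^ (length qs - 1 - k) mod 2) * 2 ^ (n - 1 - qs ! k))"

definition compl_qubits :: "nat \<Rightarrow> nat list \<Rightarrow> nat list" where
  "compl_qubits n xs = filter (\<lambda>k. k \<notin> set xs) [0..<n]"

(* the n-qubit state R viewed as a bipartite state on X \<otimes> Y, X = qubits xs, Y = the rest *)
definition regroup :: "nat \<Rightarrow> nat list \<Rightarrow> complex mat \<Rightarrow> complex mat" where
  "regroup n xs R =
     (let ys = compl_qubits n xs; dY = 2 ^ length ys; d = 2 ^ length xs * dY
      in mat d d (\<lambda>(i, j). R $$ (place n xs (i div dY) + place n ys (i mod dY),
                                 place n xs (j div dY) + place n ys (j mod dY))))"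

(* D(Y|X) for the n-qubit state R, with X = qubits xs (increasing list) measured *)
definition qdiscord :: "nat \<Rightarrow> nat list \<Rightarrow> complex mat \<Rightarrow> real" where
  "qdiscord n xs R = discord (2 ^ length xs) (2 ^ (n - length xs)) (regroup n xs R)"

definition psi1 :: "nat \<Rightarrow> complex" where
  "psi1 j = (if j = 7 then -1 else 1) / complex_of_real (2 * sqrt 2)"

definition rho1 :: "complex mat" where
  "rho1 = mat 8 8 (\<lambda>(i, j). psi1 i * cnj (psi1 j))"

end

theory Submission
  imports Defs "Jordan_Normal_Form.Schur_Decomposition"
begin

(* rho1 is a pure state, and for a pure state the discord with measurement on X is the
   entanglement entropy S(rho_X): every unnormalised conditional state Tr_X((E \<otimes> I) rho) is
   positive semidefinite, so each term p_a S(rho_{Y|a}) is nonnegative, while measuring X in the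
   computational basis leaves pure conditional states, of entropy 0; also S(rho) = 0.
   The amplitudes of psi1 only depend on whether all three bits are 1, so rho1 is invariant under
   permutations of the qubits and each bipartition looks like A|BC or AB|C, with reduced states of
   spectrum {3/4, 1/4} and {3/4, 1/4, 0, 0}.
   Entropies are read off the characteristic polynomial: by a Schur decomposition the eigenvalues
   of a density matrix, counted with multiplicity, are nonnegative and sum to its trace 1, so
   distinct eigenvalues that already sum to 1 carry the whole entropy. *)

lemma sum_swap_blocks:
  "(\<Sum>a\<in>A. \<Sum>b\<in>B. \<Sum>c\<in>C. \<Sum>d\<in>D. f a b c d) = (\<Sum>c\<in>C. \<Sum>d\<in>D. \<Sum>a\<in>A. \<Sum>b\<in>B. f a b c d)"
proof -
  have "(\<Sum>a\<in>A. \<Sum>b\<in>B. \<Sum>c\<in>C. \<Sum>d\<in>D. f a b c d) = (\<Sum>a\<in>A. \<Sum>c\<in>C. \<Sum>d\<in>D. \<Sum>b\<in>B. f a b c d)"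
    by (rule sum.cong[OF refl], subst sum.swap, rule sum.cong[OF refl], rule sum.swap)
  also have "\<dots> = (\<Sum>c\<in>C. \<Sum>d\<in>D. \<Sum>a\<in>A. \<Sum>b\<in>B. f a b c d)"
    by (subst sum.swap, rule sum.cong[OF refl], rule sum.swap)
  finally show ?thesis .
qed

lemma sum_lessThan_mult:
  fixes m n :: nat
  shows "(\<Sum>k<m * n. f k) = (\<Sum>i<m. \<Sum>j<n. f (i * n + j))"
proof -
  have "(\<Sum>j<n. f (i * n + j)) = sum f {i * n..<i * n + n}" for i
    using sum.shift_bounds_nat_ivl[of f 0 "i * n" n] by (simp add: atLeast0LessThan add.commute)
  then show ?thesis using sum.nat_group[of f n m] by simp
qed

lemma index_mult_lt:
  fixes i j m n :: nat
  assumes "i < m" and "j < n"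
  shows "i * n + j < m * n"
proof -
  have "i * n + j < (i + 1) * n" using assms(2) by simp
  also have "\<dots> \<le> m * n" using assms(1) by (intro mult_right_mono) auto
  finally show ?thesis .
qed

(* As a simp rule this splits a bound i < 8 into the cases i = 7, ..., i = 0. *)
lemma less_numeral_iff: "(i::nat) < numeral k \<longleftrightarrow> i < pred_numeral k \<or> i = pred_numeral k"
  by (simp add: numeral_eq_Suc less_Suc_eq)

lemma sum_mset_eq_sum_count:
  "(\<Sum>x\<in>#M. f x) = (\<Sum>x\<in>set_mset M. of_nat (count M x) * (f x :: 'b::comm_semiring_1))"
proof (induction M)
  case (add x M)
  show ?case
  proof (cases "x \<in># M")
    case True
    have "(\<Sum>y\<in>set_mset M. of_nat (count (add_mset x M) y) * f y)
        = (\<Sum>y\<in>set_mset M. of_nat (count M y) * f y + (if y = x then f y else 0))"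
      by (intro sum.cong) (auto simp: algebra_simps)
    then show ?thesis
      using add True by (simp add: sum.distrib insert_absorb add.commute)
  next
    case False
    have "(\<Sum>y\<in>set_mset M. of_nat (count (add_mset x M) y) * f y)
        = (\<Sum>y\<in>set_mset M. of_nat (count M y) * f y)"
      using False by (intro sum.cong) auto
    then show ?thesis
      using add False by (simp add: not_in_iff)
  qed
qed simp

lemma Re_sum_mset: "Re (sum_mset M) = (\<Sum>z\<in>#M. Re z)"
  by (induction M) auto

lemma Im_sum_mset: "Im (sum_mset M) = (\<Sum>z\<in>#M. Im z)"
  by (induction M) auto

lemma sum_mset_nonneg:
  fixes M :: "'a::ordered_comm_monoid_add multiset"
  shows "\<forall>x\<in>#M. 0 \<le> x \<Longrightarrow> 0 \<le> sum_mset M"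
  by (induction M) auto

lemma member_le_sum_mset:
  fixes M :: "'a::ordered_comm_monoid_add multiset"
  assumes "\<forall>y\<in>#M. 0 \<le> y" and "x \<in># M"
  shows "x \<le> sum_mset M"
proof -
  obtain N where M: "M = add_mset x N" using assms(2) by (metis multi_member_split)
  have "0 \<le> sum_mset N" using assms(1) by (intro sum_mset_nonneg) (simp add: M)
  then show ?thesis by (simp add: M add_increasing2)
qed

section \<open>Trace and eigenvalues\<close>

definition trace :: "'a::comm_semiring_1 mat \<Rightarrow> 'a" where
  "trace A = (\<Sum>i<dim_row A. A $$ (i, i))"

lemma trace_mult_comm:
  assumes "A \<in> carrier_mat n m" and "B \<in> carrier_mat m n"
  shows "trace (A * B) = trace (B * A)"
proof -
  have "trace (A * B) = (\<Sum>i<n. \<Sum>j<m. A $$ (i, j) * B $$ (j, i))"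
    using assms by (auto simp: trace_def scalar_prod_def atLeast0LessThan intro!: sum.cong)
  also have "\<dots> = (\<Sum>j<m. \<Sum>i<n. B $$ (j, i) * A $$ (i, j))"
    by (subst sum.swap) (simp add: mult.commute)
  also have "\<dots> = trace (B * A)"
    using assms by (auto simp: trace_def scalar_prod_def atLeast0LessThan intro!: sum.cong)
  finally show ?thesis .
qed

lemma trace_similar_mat_wit:
  assumes "similar_mat_wit A B P Q"
  shows "trace A = trace B"
proof -
  obtain n where carrier: "A \<in> carrier_mat n n" "B \<in> carrier_mat n n"
      "P \<in> carrier_mat n n" "Q \<in> carrier_mat n n"
    and QP: "Q * P = 1\<^sub>m n" and A: "A = P * B * Q"
    using assms unfolding similar_mat_wit_def Let_def by auto
  have "trace A = trace (Q * (P * B))"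
    unfolding A by (rule trace_mult_comm) (use carrier in auto)
  also have "Q * (P * B) = B"
    using carrier by (simp add: assoc_mult_mat[symmetric] QP)
  finally show ?thesis .
qed

lemma trace_smult: "A \<in> carrier_mat n n \<Longrightarrow> trace (c \<cdot>\<^sub>m A) = c * trace A"
  by (simp add: trace_def sum_distrib_left)

lemma char_poly_nonzero:
  assumes "A \<in> carrier_mat n n"
  shows "char_poly A \<noteq> 0"
  using degree_monic_char_poly[OF assms] by auto

definition eigenvalues :: "complex mat \<Rightarrow> complex multiset" where
  "eigenvalues A = proots (char_poly A)"

lemma eigenvalues_eq_mset:
  assumes "char_poly A = (\<Prod>e\<leftarrow>es. [:- e, 1:])"
  shows "eigenvalues A = mset es"
proof -
  have "0 \<notin> set (map (\<lambda>e. [:- e, 1:]) es)"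
  proof
    assume "0 \<in> set (map (\<lambda>e. [:- e, 1:]) es)"
    then obtain e :: complex where "[:- e, 1:] = 0" by auto
    then show False by simp
  qed
  then have "eigenvalues A = (\<Sum>e\<leftarrow>es. proots [:- e, 1:])"
    unfolding eigenvalues_def assms
    using proots_prod_list[of "map (\<lambda>e. [:- e, 1:]) es"] by (simp add: o_def)
  also have "\<dots> = mset es"
    by (induction es) auto
  finally show ?thesis .
qed

lemma eigenvalue_iff_mem_eigenvalues:
  assumes "A \<in> carrier_mat n n"
  shows "eigenvalue A z \<longleftrightarrow> z \<in># eigenvalues A"
  using eigenvalue_root_char_poly[OF assms] char_poly_nonzero[OF assms]
  by (simp add: eigenvalues_def)

lemma sum_mset_eigenvalues:
  assumes A: "A \<in> carrier_mat n n"
  shows "sum_mset (eigenvalues A) = trace A"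
proof -
  obtain es where es: "char_poly A = (\<Prod>e\<leftarrow>es. [:- e, 1:])"
    using char_poly_factorized[OF A] by blast
  obtain B P Q where "schur_decomposition A es = (B, P, Q)"
    by (cases "schur_decomposition A es") auto
  from schur_decomposition[OF A es this]
  have sim: "similar_mat_wit A B P Q" and diag: "diag_mat B = es" by auto
  from sim have "trace A = trace B" by (rule trace_similar_mat_wit)
  also have "\<dots> = sum_list es"
    unfolding diag[symmetric] by (simp add: trace_def diag_mat_def sum_list_sum_nth atLeast0LessThan)
  finally show ?thesis by (simp add: eigenvalues_eq_mset[OF es] sum_mset_sum_list)
qed

lemma vn_entropy_eigenvalues:
  assumes "A \<in> carrier_mat n n"
  shows "vn_entropy A = (\<Sum>z\<in>#eigenvalues A. eta (Re z))"
  using char_poly_nonzero[OF assms]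
  by (simp add: vn_entropy_def eigenvalues_def sum_mset_eq_sum_count)

section \<open>Positive semidefinite and density matrices\<close>

definition quad_form :: "nat \<Rightarrow> complex mat \<Rightarrow> complex vec \<Rightarrow> complex" where
  "quad_form n A v = (\<Sum>i<n. \<Sum>j<n. cnj (v $ i) * A $$ (i, j) * v $ j)"

lemma psd_iff_quad_form:
  "psd n A \<longleftrightarrow> A \<in> carrier_mat n n \<and>
     (\<forall>v\<in>carrier_vec n. Im (quad_form n A v) = 0 \<and> 0 \<le> Re (quad_form n A v))"
  unfolding psd_def quad_form_def ..

lemma psd_eigenvalue_nonneg:
  assumes P: "psd n A" and "eigenvalue A z"
  shows "Im z = 0 \<and> 0 \<le> Re z"
proof -
  have A: "A \<in> carrier_mat n n" using P by (simp add: psd_def)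
  obtain v where "eigenvector A v z" using assms(2) unfolding eigenvalue_def by auto
  then have v: "v \<in> carrier_vec n" and "v \<noteq> 0\<^sub>v n" and Av: "A *\<^sub>v v = z \<cdot>\<^sub>v v"
    using A unfolding eigenvector_def by auto
  then obtain k where k: "k < n" "v $ k \<noteq> 0" by (metis eq_vecI index_zero_vec carrier_vecD)
  define r where "r = (\<Sum>i<n. (cmod (v $ i))\<^sup>2)"
  have "0 < (cmod (v $ k))\<^sup>2" using k by simp
  also have "\<dots> \<le> r" unfolding r_def by (rule member_le_sum) (use k in auto)
  finally have r: "0 < r" .
  have "quad_form n A v = (\<Sum>i<n. cnj (v $ i) * (A *\<^sub>v v) $ i)"
    unfolding quad_form_def using A v
    by (auto simp: scalar_prod_def sum_distrib_left mult_ac atLeast0LessThan intro!: sum.cong)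
  also have "\<dots> = z * of_real r"
    using v by (simp add: Av r_def of_real_sum sum_distrib_left complex_norm_square mult_ac
        del: of_real_power)
  finally have "z = quad_form n A v / of_real r" using r by (simp add: field_simps)
  then show ?thesis using P v r by (simp add: psd_iff_quad_form Re_divide_of_real Im_divide_of_real)
qed

lemma psd_mem_eigenvalues:
  assumes P: "psd n A" and "z \<in># eigenvalues A"
  shows "Im z = 0 \<and> 0 \<le> Re z"
proof -
  have "A \<in> carrier_mat n n" using P by (simp add: psd_def)
  then show ?thesis
    using psd_eigenvalue_nonneg[OF P] assms(2) eigenvalue_iff_mem_eigenvalues by blast
qed

lemma psd_trace_nonneg:
  assumes P: "psd n A"
  shows "Im (trace A) = 0 \<and> 0 \<le> Re (trace A)"
proof -
  have A: "A \<in> carrier_mat n n" using P by (simp add: psd_def)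
  note ev = psd_mem_eigenvalues[OF P]
  have "image_mset Im (eigenvalues A) = image_mset (\<lambda>_. 0) (eigenvalues A)"
    using ev by (intro image_mset_cong) auto
  then have "(\<Sum>z\<in>#eigenvalues A. Im z) = 0"
    by simp
  moreover have "0 \<le> (\<Sum>z\<in>#eigenvalues A. Re z)"
    using ev by (intro sum_mset_nonneg) auto
  ultimately show ?thesis
    by (simp add: sum_mset_eigenvalues[OF A, symmetric] Re_sum_mset Im_sum_mset)
qed

definition density_mat :: "nat \<Rightarrow> complex mat \<Rightarrow> bool" where
  "density_mat n A \<longleftrightarrow> psd n A \<and> trace A = 1"

lemma density_mat_eigenvalues:
  assumes D: "density_mat n A" and z: "z \<in># eigenvalues A"
  shows "Im z = 0 \<and> 0 \<le> Re z \<and> Re z \<le> 1"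
proof -
  have P: "psd n A" and A: "A \<in> carrier_mat n n" and tr: "trace A = 1"
    using D by (auto simp: density_mat_def psd_def)
  note ev = psd_mem_eigenvalues[OF P]
  have "Re z \<le> (\<Sum>w\<in>#eigenvalues A. Re w)"
    by (rule member_le_sum_mset) (use ev z in auto)
  also have "\<dots> = 1"
    using sum_mset_eigenvalues[OF A] tr by (simp add: Re_sum_mset[symmetric])
  finally show ?thesis using ev[OF z] by simp
qed

lemma eta_nonneg: "x \<le> 1 \<Longrightarrow> 0 \<le> eta x"
  unfolding eta_def by (auto simp: mult_nonneg_nonpos)

lemma vn_entropy_nonneg:
  assumes D: "density_mat n A"
  shows "0 \<le> vn_entropy A"
proof -
  have A: "A \<in> carrier_mat n n" using D by (simp add: density_mat_def psd_def)
  show ?thesis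
    unfolding vn_entropy_eigenvalues[OF A]
    by (rule sum_mset_nonneg) (auto dest: density_mat_eigenvalues[OF D] intro: eta_nonneg)
qed

(* Eigenvalues outside the given list are nonnegative and sum to 0, so they vanish. *)
lemma vn_entropy_eq_sum_eta:
  assumes D: "density_mat n A" and "distinct ls"
    and ev: "\<forall>l\<in>set ls. eigenvalue A (of_real l)" and "sum_list ls = 1"
  shows "vn_entropy A = (\<Sum>l\<leftarrow>ls. eta l)"
proof -
  have A: "A \<in> carrier_mat n n" and tr: "trace A = 1"
    using D by (auto simp: density_mat_def psd_def)
  define R where "R = image_mset Re (eigenvalues A)"
  have R_nonneg: "\<forall>x\<in>#R. 0 \<le> x"
    using density_mat_eigenvalues[OF D] by (auto simp: R_def)
  have "sum_mset R = 1"
    using sum_mset_eigenvalues[OF A] tr by (simp add: R_def Re_sum_mset[symmetric])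
  have "set ls \<subseteq> set_mset R"
    using ev eigenvalue_iff_mem_eigenvalues[OF A] unfolding R_def by force
  then have "mset ls \<subseteq># R"
    using mset_set_set[OF \<open>distinct ls\<close>] mset_set_set_mset_msubset[of R]
    by (metis finite_set finite_set_mset msubset_mset_set_iff subset_mset.order_trans)
  then obtain T where R: "R = mset ls + T"
    by (auto simp: mset_subset_eq_exists_conv)
  have "sum_mset T = 0"
    using \<open>sum_mset R = 1\<close> \<open>sum_list ls = 1\<close> by (simp add: R sum_mset_sum_list)
  then have "\<forall>x\<in>#T. x = 0"
    using R_nonneg member_le_sum_mset[of T] by (force simp: R)
  then have "image_mset eta T = image_mset (\<lambda>_. 0) T"
    by (intro image_mset_cong) (simp add: eta_def)
  then have "(\<Sum>x\<in>#T. eta x) = 0"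
    by simp
  moreover have "vn_entropy A = (\<Sum>x\<in>#R. eta x)"
    by (simp add: vn_entropy_eigenvalues[OF A] R_def multiset.map_comp o_def)
  moreover have "(\<Sum>x\<in>#mset ls. eta x) = (\<Sum>l\<leftarrow>ls. eta l)"
    by (metis mset_map sum_mset_sum_list)
  ultimately show ?thesis
    by (simp add: R)
qed

section \<open>Pure states\<close>

definition ket_bra :: "nat \<Rightarrow> (nat \<Rightarrow> complex) \<Rightarrow> complex mat" where
  "ket_bra n \<phi> = mat n n (\<lambda>(i, j). \<phi> i * cnj (\<phi> j))"

lemma ket_bra_carrier [simp]: "ket_bra n \<phi> \<in> carrier_mat n n"
  by (simp add: ket_bra_def)

lemma dim_ket_bra [simp]: "dim_row (ket_bra n \<phi>) = n" "dim_col (ket_bra n \<phi>) = n"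
  by (simp_all add: ket_bra_def)

lemma psd_ket_bra: "psd n (ket_bra n \<phi>)"
  unfolding psd_iff_quad_form
proof (intro conjI ballI)
  show "ket_bra n \<phi> \<in> carrier_mat n n" by simp
next
  fix v :: "complex vec"
  define t where "t = (\<Sum>i<n. cnj (v $ i) * \<phi> i)"
  have "quad_form n (ket_bra n \<phi>) v = t * cnj t"
    unfolding quad_form_def ket_bra_def t_def
    by (simp add: cnj_sum sum_distrib_left sum_distrib_right mult_ac) (subst sum.swap, simp add: mult_ac)
  also have "\<dots> = of_real ((cmod t)\<^sup>2)" by (rule complex_norm_square[symmetric])
  finally show "Im (quad_form n (ket_bra n \<phi>) v) = 0" "0 \<le> Re (quad_form n (ket_bra n \<phi>) v)"
    by auto
qed

lemma trace_ket_bra: "trace (ket_bra n \<phi>) = of_real (\<Sum>i<n. (cmod (\<phi> i))\<^sup>2)"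
  by (simp add: trace_def ket_bra_def of_real_sum complex_norm_square del: of_real_power)

lemma psd_smult:
  assumes P: "psd n A" and "0 \<le> c"
  shows "psd n (of_real c \<cdot>\<^sub>m A)"
proof -
  have A: "A \<in> carrier_mat n n" using P by (simp add: psd_def)
  have "quad_form n (of_real c \<cdot>\<^sub>m A) v = of_real c * quad_form n A v" for v
    unfolding quad_form_def using A by (auto simp: sum_distrib_left mult_ac intro!: sum.cong)
  then show ?thesis using P A \<open>0 \<le> c\<close> by (auto simp: psd_iff_quad_form)
qed

lemma eigenvalueI:
  assumes "A \<in> carrier_mat n n" and "v \<in> carrier_vec n" and "i < n" and "v $ i \<noteq> 0"
    and "A *\<^sub>v v = k \<cdot>\<^sub>v v"
  shows "eigenvalue A k"
  unfolding eigenvalue_def eigenvector_def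
  using assms by (intro exI[of _ v]) auto

lemma vn_entropy_normalized_ket_bra:
  assumes s: "s = (\<Sum>i<n. (cmod (\<phi> i))\<^sup>2)" and "0 < s"
  shows "vn_entropy (of_real (1 / s) \<cdot>\<^sub>m ket_bra n \<phi>) = 0"
proof -
  let ?A = "of_real (1 / s) \<cdot>\<^sub>m ket_bra n \<phi>"
  have "density_mat n ?A"
    using psd_smult[OF psd_ket_bra, where c = "1 / s"] \<open>0 < s\<close>
    by (simp add: density_mat_def trace_smult[OF ket_bra_carrier] trace_ket_bra s[symmetric])
  moreover have "eigenvalue ?A (of_real 1)"
  proof -
    have "\<exists>i<n. \<phi> i \<noteq> 0"
    proof (rule ccontr)
      assume "\<not> (\<exists>i<n. \<phi> i \<noteq> 0)"
      then have "s = 0" by (simp add: s)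
      with \<open>0 < s\<close> show False by simp
    qed
    then obtain i where i: "i < n" "\<phi> i \<noteq> 0" by blast
    have norm: "(\<Sum>j<n. cnj (\<phi> j) * \<phi> j) = of_real s"
      by (simp add: s of_real_sum complex_norm_square mult.commute del: of_real_power)
    have "(?A *\<^sub>v vec n \<phi>) $ j = of_real (1 / s) * \<phi> j * (\<Sum>k<n. cnj (\<phi> k) * \<phi> k)"
      if "j < n" for j
      using that by (simp add: ket_bra_def scalar_prod_def atLeast0LessThan sum_distrib_left mult_ac)
    then have "?A *\<^sub>v vec n \<phi> = of_real 1 \<cdot>\<^sub>v vec n \<phi>"
      using \<open>0 < s\<close> by (intro eq_vecI) (simp_all add: norm)
    then show ?thesis by (intro eigenvalueI[of _ n _ i]) (use i in \<open>auto simp: ket_bra_def\<close>)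
  qed
  ultimately have "vn_entropy ?A = (\<Sum>l\<leftarrow>[1]. eta l)"
    by (intro vn_entropy_eq_sum_eta) auto
  then show ?thesis by (simp add: eta_def)
qed

section \<open>Partial traces and measurements\<close>

lemma trace_ptrace_X:
  assumes "dim_row M = dX * dY"
  shows "trace (ptrace_X dX dY M) = trace M"
proof -
  have "trace M = (\<Sum>x<dX. \<Sum>y<dY. M $$ (x * dY + y, x * dY + y))"
    by (simp add: trace_def assms sum_lessThan_mult)
  also have "\<dots> = trace (ptrace_X dX dY M)"
    by (subst sum.swap) (simp add: trace_def ptrace_X_def)
  finally show ?thesis by simp
qed

lemma dim_tensor_id [simp]:
  "dim_row (tensor_id dX dY E) = dX * dY" "dim_col (tensor_id dX dY E) = dX * dY"
  by (simp_all add: tensor_id_def)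

lemma tensor_id_index:
  assumes "x < dX" "x' < dX" "y < dY" "z < dY"
  shows "tensor_id dX dY E $$ (x * dY + y, x' * dY + z) = (if y = z then E $$ (x, x') else 0)"
proof -
  have "dY \<noteq> 0" using assms by auto
  then show ?thesis using assms by (simp add: tensor_id_def index_mult_lt)
qed

(* Tr_X((E \<otimes> I) R), the unnormalised conditional state p_a rho_{Y|a} of the outcome with
   effect E. *)
definition cond_op :: "nat \<Rightarrow> nat \<Rightarrow> complex mat \<Rightarrow> complex mat \<Rightarrow> complex mat" where
  "cond_op dX dY R E = ptrace_X dX dY (tensor_id dX dY E * R)"

lemma cond_term_cond_op:
  "cond_term dX dY R E =
     (let p = Re (trace (cond_op dX dY R E))
      in if p = 0 then 0 else p * vn_entropy (of_real (1 / p) \<cdot>\<^sub>m cond_op dX dY R E))"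
  unfolding cond_term_def cond_op_def Let_def trace_def[symmetric]
  by (simp add: trace_ptrace_X)

lemma cond_term_nonneg:
  assumes P: "psd dY (cond_op dX dY R E)"
  shows "0 \<le> cond_term dX dY R E"
proof -
  define p where "p = Re (trace (cond_op dX dY R E))"
  have tr: "trace (cond_op dX dY R E) = of_real p" and "0 \<le> p"
    using psd_trace_nonneg[OF P] by (auto simp: p_def complex_eq_iff)
  have C: "cond_op dX dY R E \<in> carrier_mat dY dY" using P by (simp add: psd_def)
  show ?thesis
  proof (cases "p = 0")
    case False
    have "trace (of_real (1 / p) \<cdot>\<^sub>m cond_op dX dY R E) = 1"
      using False by (simp add: trace_smult[OF C] tr)
    with False have "density_mat dY (of_real (1 / p) \<cdot>\<^sub>m cond_op dX dY R E)"
      using psd_smult[OF P, where c = "1 / p"] \<open>0 \<le> p\<close> by (simp add: density_mat_def)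
    then show ?thesis
      using vn_entropy_nonneg \<open>0 \<le> p\<close> by (simp add: cond_term_cond_op p_def[symmetric])
  qed (simp add: cond_term_cond_op p_def[symmetric])
qed

lemma cond_term_pure:
  assumes pure: "cond_op dX dY R E = ket_bra dY \<psi>"
  shows "cond_term dX dY R E = 0"
proof -
  define s where "s = (\<Sum>i<dY. (cmod (\<psi> i))\<^sup>2)"
  show ?thesis
  proof (cases "s = 0")
    case False
    then have "0 < s" by (simp add: s_def order_less_le sum_nonneg)
    from vn_entropy_normalized_ket_bra[OF s_def this] show ?thesis
      by (simp add: cond_term_cond_op Let_def pure trace_ket_bra s_def[symmetric])
  qed (simp add: cond_term_cond_op Let_def pure trace_ket_bra s_def[symmetric])
qed

lemma cond_op_ket_bra_entry:
  assumes E: "E \<in> carrier_mat dX dX" and "y < dY" and "y' < dY"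
  shows "cond_op dX dY (ket_bra (dX * dY) \<phi>) E $$ (y, y')
       = (\<Sum>x<dX. \<Sum>x'<dX. E $$ (x, x') * \<phi> (x' * dY + y) * cnj (\<phi> (x * dY + y')))"
proof -
  have mult_if: "(if P then c else 0) * t = (if P then c * t else 0)" for P and c t :: complex
    by simp
  have "(tensor_id dX dY E * ket_bra (dX * dY) \<phi>) $$ (x * dY + y, x * dY + y')
      = (\<Sum>x'<dX. E $$ (x, x') * \<phi> (x' * dY + y) * cnj (\<phi> (x * dY + y')))" if "x < dX" for x
    using that assms
    by (simp add: ket_bra_def scalar_prod_def atLeast0LessThan index_mult_lt sum_lessThan_mult
        tensor_id_index mult_if mult.assoc)
  then show ?thesis
    using assms by (simp add: cond_op_def ptrace_X_def)
qed

lemma quad_form_cond_op_ket_bra: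
  assumes E: "E \<in> carrier_mat dX dX" and v: "v \<in> carrier_vec dY"
  shows "quad_form dY (cond_op dX dY (ket_bra (dX * dY) \<phi>) E) v
       = quad_form dX E (vec dX (\<lambda>x. \<Sum>y<dY. cnj (v $ y) * \<phi> (x * dY + y)))"
proof -
  define G where "G x x' y y' =
    cnj (v $ y) * \<phi> (x' * dY + y) * E $$ (x, x') * (v $ y' * cnj (\<phi> (x * dY + y')))" for x x' y y'
  have "quad_form dY (cond_op dX dY (ket_bra (dX * dY) \<phi>) E) v
      = (\<Sum>y<dY. \<Sum>y'<dY. \<Sum>x<dX. \<Sum>x'<dX. G x x' y y')"
    by (simp add: quad_form_def cond_op_ket_bra_entry[OF E] G_def sum_distrib_left
        sum_distrib_right mult_ac)
  also have "\<dots> = (\<Sum>y'<dY. \<Sum>y<dY. \<Sum>x<dX. \<Sum>x'<dX. G x x' y y')"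
    by (rule sum.swap)
  also have "\<dots> = (\<Sum>x<dX. \<Sum>x'<dX. \<Sum>y'<dY. \<Sum>y<dY. G x x' y y')"
    by (rule sum_swap_blocks)
  also have "\<dots> = quad_form dX E (vec dX (\<lambda>x. \<Sum>y<dY. cnj (v $ y) * \<phi> (x * dY + y)))"
    by (simp add: quad_form_def G_def cnj_sum sum_distrib_left sum_distrib_right mult_ac)
  finally show ?thesis .
qed

lemma psd_cond_op_ket_bra:
  assumes E: "psd dX E"
  shows "psd dY (cond_op dX dY (ket_bra (dX * dY) \<phi>) E)"
proof -
  have "E \<in> carrier_mat dX dX" using E by (simp add: psd_def)
  moreover have "cond_op dX dY (ket_bra (dX * dY) \<phi>) E \<in> carrier_mat dY dY"
    by (simp add: cond_op_def ptrace_X_def)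
  ultimately show ?thesis
    using E by (auto simp: psd_iff_quad_form quad_form_cond_op_ket_bra)
qed

abbreviation basis_proj :: "nat \<Rightarrow> nat \<Rightarrow> complex mat" where
  "basis_proj d a \<equiv> ket_bra d (\<lambda>i. if i = a then 1 else 0)"

lemma basis_proj_index:
  "i < d \<Longrightarrow> j < d \<Longrightarrow> basis_proj d a $$ (i, j) = (if i = a \<and> j = a then 1 else 0)"
  by (simp add: ket_bra_def)

lemma cond_op_ket_bra_ket_bra:
  "cond_op dX dY (ket_bra (dX * dY) \<phi>) (ket_bra dX e)
     = ket_bra dY (\<lambda>y. \<Sum>x<dX. cnj (e x) * \<phi> (x * dY + y))"
proof (rule eq_matI)
  fix y y' assume "y < dim_row (ket_bra dY (\<lambda>y. \<Sum>x<dX. cnj (e x) * \<phi> (x * dY + y)))"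
    and "y' < dim_col (ket_bra dY (\<lambda>y. \<Sum>x<dX. cnj (e x) * \<phi> (x * dY + y)))"
  then have y: "y < dY" "y' < dY" by auto
  have "cond_op dX dY (ket_bra (dX * dY) \<phi>) (ket_bra dX e) $$ (y, y')
      = (\<Sum>x<dX. \<Sum>x'<dX. e x * cnj (e x') * \<phi> (x' * dY + y) * cnj (\<phi> (x * dY + y')))"
    using y by (simp add: cond_op_ket_bra_entry, simp add: ket_bra_def)
  also have "\<dots> = (\<Sum>x'<dX. \<Sum>x<dX.
      (cnj (e x') * \<phi> (x' * dY + y)) * cnj (cnj (e x) * \<phi> (x * dY + y')))"
    by (subst sum.swap) (simp add: mult_ac)
  also have "\<dots> = ket_bra dY (\<lambda>y. \<Sum>x<dX. cnj (e x) * \<phi> (x * dY + y)) $$ (y, y')"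
    using y by (simp add: ket_bra_def cnj_sum sum_product)
  finally show "cond_op dX dY (ket_bra (dX * dY) \<phi>) (ket_bra dX e) $$ (y, y')
      = ket_bra dY (\<lambda>y. \<Sum>x<dX. cnj (e x) * \<phi> (x * dY + y)) $$ (y, y')" .
qed (simp_all add: cond_op_def ptrace_X_def)

lemma povm_basis_proj: "povm d (map (basis_proj d) [0..<d])"
  unfolding povm_def
proof (intro conjI allI impI ballI)
  fix i j assume "i < d" "j < d"
  then have "(\<Sum>k<d. basis_proj d k $$ (i, j)) = (\<Sum>k<d. if k = i then of_bool (i = j) else 0)"
    by (intro sum.cong) (auto simp: basis_proj_index)
  then show "(\<Sum>k<length (map (basis_proj d) [0..<d]). map (basis_proj d) [0..<d] ! k $$ (i, j))
      = (if i = j then 1 else 0)"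
    using \<open>i < d\<close> by simp
qed (auto simp: psd_ket_bra)

lemma psd_ptrace_Y_ket_bra: "psd dX (ptrace_Y dX dY (ket_bra (dX * dY) \<phi>))"
  unfolding psd_iff_quad_form
proof (intro conjI ballI)
  show "ptrace_Y dX dY (ket_bra (dX * dY) \<phi>) \<in> carrier_mat dX dX"
    by (simp add: ptrace_Y_def)
next
  fix v :: "complex vec" assume "v \<in> carrier_vec dX"
  define t where "t y = (\<Sum>x<dX. cnj (v $ x) * \<phi> (x * dY + y))" for y
  define F where "F x x' y = cnj (v $ x) * \<phi> (x * dY + y) * (v $ x' * cnj (\<phi> (x' * dY + y)))"
    for x x' y
  have "quad_form dX (ptrace_Y dX dY (ket_bra (dX * dY) \<phi>)) v
      = (\<Sum>x<dX. \<Sum>x'<dX. \<Sum>y<dY. F x x' y)"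
    by (auto simp: quad_form_def ptrace_Y_def ket_bra_def F_def index_mult_lt sum_distrib_left
        sum_distrib_right mult_ac intro!: sum.cong)
  also have "\<dots> = (\<Sum>x<dX. \<Sum>y<dY. \<Sum>x'<dX. F x x' y)"
    by (rule sum.cong[OF refl], rule sum.swap)
  also have "\<dots> = (\<Sum>y<dY. \<Sum>x<dX. \<Sum>x'<dX. F x x' y)"
    by (rule sum.swap)
  also have "\<dots> = (\<Sum>y<dY. t y * cnj (t y))"
    by (simp add: t_def F_def cnj_sum sum_distrib_left sum_distrib_right mult_ac)
  also have "\<dots> = of_real (\<Sum>y<dY. (cmod (t y))\<^sup>2)"
    by (simp add: of_real_sum complex_norm_square del: of_real_power)
  finally show "Im (quad_form dX (ptrace_Y dX dY (ket_bra (dX * dY) \<phi>)) v) = 0"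
    "0 \<le> Re (quad_form dX (ptrace_Y dX dY (ket_bra (dX * dY) \<phi>)) v)"
    by (simp_all add: sum_nonneg)
qed

theorem discord_ket_bra:
  assumes norm: "(\<Sum>i<dX * dY. (cmod (\<phi> i))\<^sup>2) = 1"
  shows "discord dX dY (ket_bra (dX * dY) \<phi>) = vn_entropy (ptrace_Y dX dY (ket_bra (dX * dY) \<phi>))"
proof -
  let ?f = "\<lambda>Es. \<Sum>k<length Es. cond_term dX dY (ket_bra (dX * dY) \<phi>) (Es ! k)"
  have "(INF Es \<in> {Es. povm dX Es}. ?f Es) = 0"
  proof (rule cInf_eq_minimum)
    have "?f (map (basis_proj dX) [0..<dX]) = 0"
      by (simp add: cond_term_pure[OF cond_op_ket_bra_ket_bra])
    then show "0 \<in> ?f ` {Es. povm dX Es}" using povm_basis_proj by force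
  next
    fix x assume "x \<in> ?f ` {Es. povm dX Es}"
    then show "0 \<le> x"
      by (auto simp: povm_def intro!: sum_nonneg cond_term_nonneg psd_cond_op_ket_bra)
  qed
  moreover have "of_real (1 / 1) \<cdot>\<^sub>m ket_bra (dX * dY) \<phi> = ket_bra (dX * dY) \<phi>"
    by (rule eq_matI) (simp_all add: ket_bra_def)
  with vn_entropy_normalized_ket_bra[OF norm[symmetric]]
  have "vn_entropy (ket_bra (dX * dY) \<phi>) = 0" by simp
  ultimately show ?thesis by (simp add: discord_def)
qed

section \<open>The state rho1\<close>

lemma rho1_eq_ket_bra: "rho1 = ket_bra 8 psi1"
  unfolding rho1_def ket_bra_def ..

lemma psi1_mult_cnj:
  "psi1 i * cnj (psi1 j) = of_real ((if i = 7 then -1 else 1) * (if j = 7 then -1 else 1) / 8)"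
proof -
  have "(2 * sqrt 2) * (2 * sqrt 2) = (8::real)" by simp
  then show ?thesis by (simp add: psi1_def of_real_mult[symmetric] del: of_real_mult)
qed

lemma psi1_normalized: "(\<Sum>i<8. (cmod (psi1 i))\<^sup>2) = 1"
proof -
  have "(cmod (psi1 i))\<^sup>2 = 1 / 8" for i
    by (simp add: psi1_def norm_divide power_divide norm_mult)
  then show ?thesis by (simp only:) simp
qed

lemma regroup_rho1:
  assumes "xs \<in> {[0], [1], [2], [0, 1], [0, 2], [1, 2]}"
  shows "regroup 3 xs rho1 = rho1"
proof -
  let ?ys = "compl_qubits 3 xs"
  let ?dY = "2 ^ length ?ys :: nat"
  define \<pi> where "\<pi> i = place 3 xs (i div ?dY) + place 3 ?ys (i mod ?dY)" for i
  have dims: "2 ^ length xs * ?dY = 8"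
    using assms by (elim insertE emptyE) (simp_all add: compl_qubits_def upt_rec)
  have \<pi>: "\<forall>i<8. \<pi> i < 8 \<and> (\<pi> i = 7 \<longleftrightarrow> i = 7)"
    using assms by (elim insertE emptyE)
      (simp_all add: \<pi>_def compl_qubits_def upt_rec place_def lessThan_nat_numeral less_numeral_iff)
  then have "psi1 (\<pi> i) = psi1 i" if "i < 8" for i
    using that by (simp add: psi1_def)
  with \<pi> show ?thesis
    by (auto simp: regroup_def Let_def dims rho1_def \<pi>_def[symmetric] intro!: eq_matI)
qed

lemma ptrace_Y_rho1_2_4: "ptrace_Y 2 4 rho1 = mat 2 2 (\<lambda>(i, j). if i = j then 1/2 else 1/4)"
  by (rule eq_matI)
    (auto simp: ptrace_Y_def rho1_def psi1_mult_cnj lessThan_nat_numeral less_numeral_iff)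

lemma ptrace_Y_rho1_4_2:
  "ptrace_Y 4 2 rho1 = mat 4 4 (\<lambda>(i, j). if i < 3 \<and> j < 3 \<or> i = 3 \<and> j = 3 then 1/4 else 0)"
  by (rule eq_matI)
    (auto simp: ptrace_Y_def rho1_def psi1_mult_cnj lessThan_nat_numeral less_numeral_iff)

lemma vn_entropy_ptrace_Y_rho1_2_4: "vn_entropy (ptrace_Y 2 4 rho1) = eta (3/4) + eta (1/4)"
proof -
  let ?A = "ptrace_Y 2 4 rho1"
  have A: "?A \<in> carrier_mat 2 2" by (simp add: ptrace_Y_def)
  have "density_mat 2 ?A"
    using psd_ptrace_Y_ket_bra[of 2 4 psi1]
    by (simp add: density_mat_def rho1_eq_ket_bra[symmetric])
      (simp add: ptrace_Y_rho1_2_4 trace_def lessThan_nat_numeral)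
  moreover have "eigenvalue ?A (of_real (3/4))"
    by (rule eigenvalueI[OF A, of "vec 2 (\<lambda>_. 1)" 0])
      (auto intro!: eq_vecI simp: ptrace_Y_rho1_2_4 scalar_prod_def atLeast0LessThan
        lessThan_nat_numeral less_numeral_iff)
  moreover have "eigenvalue ?A (of_real (1/4))"
    by (rule eigenvalueI[OF A, of "vec 2 (\<lambda>i. if i = 0 then 1 else -1)" 0])
      (auto intro!: eq_vecI simp: ptrace_Y_rho1_2_4 scalar_prod_def atLeast0LessThan
        lessThan_nat_numeral less_numeral_iff)
  ultimately have "vn_entropy ?A = (\<Sum>l\<leftarrow>[3/4, 1/4]. eta l)"
    by (intro vn_entropy_eq_sum_eta) auto
  then show ?thesis by simp
qed

lemma vn_entropy_ptrace_Y_rho1_4_2: "vn_entropy (ptrace_Y 4 2 rho1) = eta (3/4) + eta (1/4)"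
proof -
  let ?A = "ptrace_Y 4 2 rho1"
  have A: "?A \<in> carrier_mat 4 4" by (simp add: ptrace_Y_def)
  have "density_mat 4 ?A"
    using psd_ptrace_Y_ket_bra[of 4 2 psi1]
    by (simp add: density_mat_def rho1_eq_ket_bra[symmetric])
      (simp add: ptrace_Y_rho1_4_2 trace_def lessThan_nat_numeral)
  moreover have "eigenvalue ?A (of_real (3/4))"
    by (rule eigenvalueI[OF A, of "vec 4 (\<lambda>i. if i < 3 then 1 else 0)" 0])
      (auto intro!: eq_vecI simp: ptrace_Y_rho1_4_2 scalar_prod_def atLeast0LessThan
        lessThan_nat_numeral less_numeral_iff)
  moreover have "eigenvalue ?A (of_real (1/4))"
    by (rule eigenvalueI[OF A, of "vec 4 (\<lambda>i. if i = 3 then 1 else 0)" 3])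
      (auto intro!: eq_vecI simp: ptrace_Y_rho1_4_2 scalar_prod_def atLeast0LessThan
        lessThan_nat_numeral less_numeral_iff)
  ultimately have "vn_entropy ?A = (\<Sum>l\<leftarrow>[3/4, 1/4]. eta l)"
    by (intro vn_entropy_eq_sum_eta) auto
  then show ?thesis by simp
qed

theorem lemma1:
  shows "qdiscord 3 [0] rho1 = - (1/4) * log 2 (1/4) - (3/4) * log 2 (3/4)
       \<and> qdiscord 3 [1] rho1 = - (1/4) * log 2 (1/4) - (3/4) * log 2 (3/4)
       \<and> qdiscord 3 [2] rho1 = - (1/4) * log 2 (1/4) - (3/4) * log 2 (3/4)
       \<and> qdiscord 3 [0, 1] rho1 = - (1/4) * log 2 (1/4) - (3/4) * log 2 (3/4)
       \<and> qdiscord 3 [0, 2] rho1 = - (1/4) * log 2 (1/4) - (3/4) * log 2 (3/4)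
       \<and> qdiscord 3 [1, 2] rho1 = - (1/4) * log 2 (1/4) - (3/4) * log 2 (3/4)"
proof -
  have entropy: "eta (3/4) + eta (1/4) = - (1/4) * log 2 (1/4) - (3/4) * log 2 (3/4)"
    by (simp add: eta_def)
  have "discord 2 4 rho1 = eta (3/4) + eta (1/4)" "discord 4 2 rho1 = eta (3/4) + eta (1/4)"
    using discord_ket_bra[where dX = 2 and dY = 4 and \<phi> = psi1]
      discord_ket_bra[where dX = 4 and dY = 2 and \<phi> = psi1] psi1_normalized
      vn_entropy_ptrace_Y_rho1_2_4 vn_entropy_ptrace_Y_rho1_4_2
    by (simp_all add: rho1_eq_ket_bra)
  moreover have "qdiscord 3 xs rho1 = discord (2 ^ length xs) (2 ^ (3 - length xs)) rho1"
    if "xs \<in> {[0], [1], [2], [0, 1], [0, 2], [1, 2]}" for xs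
    using regroup_rho1[OF that] by (simp add: qdiscord_def)
  ultimately show ?thesis
    using entropy by simp
qed

end
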